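(* For every integer $N$, the polynomials $\phi_N(y,z)$ satisfy $$\phi_{N+1}(y,z)\phi_N(y/q,z)+q^{N+1}z\,\phi_{N+1}(y/q,z)\phi_N(y,z)=(1+z)\phi_{N+1}(y,qz)\phi_N(y/q,z/q),$$ $$q^{-N-1}z\,\phi_{N+1}(y,z)\phi_N(y/q,z)+\phi_{N+1}(y/q,z)\phi_N(y,z)=(1+z)\phi_{N+1}(y/q,z/q)\phi_N(y,qz),$$ $$z\,\phi_{N+1}(y/q,z/q)\phi_N(y,z)+y\,\phi_{N+1}(y,z)\phi_N(y/q,z/q)=(y+z)\phi_{N+1}(y,z/q)\phi_N(y/q,z),$$ $$y\,\phi_{N+1}(y/q,z/q)\phi_N(y,z)+z\,\phi_{N+1}(y,z)\phi_N(y/q,z/q)=(y+z)\phi_{N+1}(y/q,z)\phi_N(y,z/q).$$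
   Context: $q$ is a fixed nonzero complex constant that is not a root of unity; $y,z$ are variables. For $k\in\mathbb{Z}$ the polynomials $p_k(y,z)$ are defined by the generating function $\sum_{n\ge 0}p_n(y,z)t^n=\frac{(-(1-q)t;q)_\infty}{((1-q)yt;q)_\infty((1-q)zt;q)_\infty}$, with $(a;q)_\infty=\prod_{i\ge0}(1-aq^i)$, and $p_k=0$ for $k<0$; equivalently $p_n(y,z)=(1-q)^n\sum_{a+b+c=n}\frac{y^a z^b q^{c(c-1)/2}}{(q;q)_a(q;q)_b(q;q)_c}$ with $(q;q)_m=\prod_{j=1}^m(1-q^j)$. For $N>0$, $\phi_N(y,z)=\det\big(p_{N-2i+j+1}(y,z)\big)_{i,j=1}^N$; $\phi_0=1$; for $N<0$, $\phi_N=(-1)^{N(N+1)/2}\phi_{-N-1}$. *)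

theory Defs
  imports Complex_Main "Jordan_Normal_Form.Determinant"
begin

definition qpoch :: "complex \<Rightarrow> nat \<Rightarrow> complex" where
  "qpoch q m = (\<Prod>j\<in>{1..m}. 1 - q ^ j)"

definition pp :: "complex \<Rightarrow> int \<Rightarrow> complex \<Rightarrow> complex \<Rightarrow> complex" where
  "pp q n y z = (if n < 0 then 0 else
     (1 - q) ^ nat n *
       (\<Sum>a\<le>nat n. \<Sum>b\<le>nat n - a.
          let c = nat n - a - b in
          y ^ a * z ^ b * q ^ (c * (c - 1) div 2) / (qpoch q a * qpoch q b * qpoch q c)))"

definition phi_nat :: "complex \<Rightarrow> nat \<Rightarrow> complex \<Rightarrow> complex \<Rightarrow> complex" where
  "phi_nat q N y z = (if N = 0 then 1 else
     det (mat N N (\<lambda>(i, j). pp q (int N - 2 * (int i + 1) + (int j + 1) + 1) y z)))"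

definition phi :: "complex \<Rightarrow> int \<Rightarrow> complex \<Rightarrow> complex \<Rightarrow> complex" where
  "phi q N y z = (if N \<ge> 0 then phi_nat q (nat N) y z
     else (-1) ^ nat ((N * (N + 1)) div 2) * phi_nat q (nat (- N - 1)) y z)"

end

theory Submission
  imports Defs "HOL-Computational_Algebra.Formal_Power_Series"
begin

(* phi_N(y, z) is the staircase Jacobi-Trudi determinant det (p_(N-2i+j)) of the sequence
   p_n(y, z), whose generating function is e_q((1-q) y t) e_q((1-q) z t) E_q((1-q) t).  The
   q-difference equations of the q-exponentials say that replacing y by q y, z by q z, or both,
   multiplies this generating function by a linear factor 1 - c t (in the last case after the
   dilation t -> q t, which only rescales the determinant by a power of q).  So the eight
   determinants in each identity are staircase determinants of g = p(y/q, z/q) with its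
   generating function multiplied by linear factors, and the identities become three bilinear
   relations between such determinants.  Two of them are three-term Plucker relations for
   (N+3) x (N+3) matrices whose first two rows are geometric, u^k and v^k; the third is a linear
   combination of those two when u <> v and follows for u = v by continuity.  Negative N reduce
   to nonnegative ones through phi_(-N-1) = +-phi_N, which swaps the first two and the last two
   identities. *)

section \<open>Determinant identities\<close>

definition col_mat :: "nat \<Rightarrow> (nat \<Rightarrow> nat \<Rightarrow> 'a) \<Rightarrow> 'a mat" where
  "col_mat n f = mat n n (\<lambda>(i, j). f j i)"

lemma col_mat_carrier [simp]: "col_mat n f \<in> carrier_mat n n"
  and col_mat_index [simp]: "i < n \<Longrightarrow> j < n \<Longrightarrow> col_mat n f $$ (i, j) = f j i"
  and col_mat_dim [simp]: "dim_row (col_mat n f) = n" "dim_col (col_mat n f) = n"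
  unfolding col_mat_def by auto

lemma det_col_mat_linear:
  fixes f :: "nat \<Rightarrow> nat \<Rightarrow> 'a :: comm_ring_1"
  assumes k: "k < n"
  shows "det (col_mat n (f(k := x))) = (\<Sum>i<n. x i * cofactor (col_mat n f) i k)"
proof -
  have "mat_delete (col_mat n (f(k := x))) i k = mat_delete (col_mat n f) i k" for i
    by (rule eq_matI) (auto simp: mat_delete_def col_mat_def)
  then show ?thesis
    using laplace_expansion_column[OF col_mat_carrier k, of "f(k := x)"] k
    by (simp add: cofactor_def)
qed

lemma det_col_mat_mult_eq_sum:
  fixes f :: "nat \<Rightarrow> nat \<Rightarrow> 'a :: comm_ring_1"
  assumes i: "i < n"
  shows "det (col_mat n f) * b i = (\<Sum>k<n. f k i * det (col_mat n (f(k := b))))"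
proof -
  let ?A = "col_mat n f"
  have adj: "(\<Sum>k<n. f k i * cofactor ?A l k) = (if i = l then det ?A else 0)" if l: "l < n" for l
  proof -
    have "(?A * adj_mat ?A) $$ (i, l) = (\<Sum>k<n. f k i * cofactor ?A l k)"
      using i l by (auto simp: times_mat_def scalar_prod_def adj_mat_def intro: sum.cong)
    moreover have "(?A * adj_mat ?A) $$ (i, l) = (if i = l then det ?A else 0)"
      using adj_mat(2)[OF col_mat_carrier[of n f]] i l by simp
    ultimately show ?thesis by simp
  qed
  have "(\<Sum>k<n. f k i * det (col_mat n (f(k := b))))
      = (\<Sum>k<n. f k i * (\<Sum>l<n. b l * cofactor ?A l k))"
    by (simp add: det_col_mat_linear)
  also have "\<dots> = (\<Sum>l<n. b l * (\<Sum>k<n. f k i * cofactor ?A l k))"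
    by (simp add: sum_distrib_left mult_ac) (rule sum.swap)
  also have "\<dots> = b i * det ?A"
    using i by (simp add: adj if_distrib cong: if_cong)
  finally show ?thesis by (simp add: mult.commute)
qed

lemma det_col_mat_plucker:
  fixes f :: "nat \<Rightarrow> nat \<Rightarrow> 'a :: comm_ring_1"
  assumes p: "p < n" and p': "p' < n" and pp': "p \<noteq> p'"
  shows "det (col_mat n (f(p := c, p' := d))) * det (col_mat n (f(p := a, p' := b)))
       = det (col_mat n (f(p := b, p' := d))) * det (col_mat n (f(p := a, p' := c)))
       + det (col_mat n (f(p := c, p' := b))) * det (col_mat n (f(p := a, p' := d)))"
proof -
  define V where "V = f(p := c, p' := d)"
  define C where "C i = cofactor (col_mat n (f(p := a))) i p'" for i
  have L: "det (col_mat n (f(p := a, p' := x))) = (\<Sum>i<n. x i * C i)" for x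
    unfolding C_def by (rule det_col_mat_linear[OF p'])
  have "det (col_mat n V) * det (col_mat n (f(p := a, p' := b)))
      = (\<Sum>i<n. C i * (det (col_mat n V) * b i))"
    by (simp add: L sum_distrib_left mult_ac)
  also have "\<dots> = (\<Sum>i<n. C i * (\<Sum>k<n. V k i * det (col_mat n (V(k := b)))))"
    by (simp add: det_col_mat_mult_eq_sum)
  also have "\<dots> = (\<Sum>k<n. det (col_mat n (V(k := b))) * (\<Sum>i<n. V k i * C i))"
    by (simp add: sum_distrib_left mult_ac) (rule sum.swap)
  also have "\<dots> = (\<Sum>k<n. det (col_mat n (V(k := b))) * det (col_mat n (f(p := a, p' := V k))))"
    by (simp only: L)
  also have "\<dots> = (\<Sum>k\<in>{p, p'}. det (col_mat n (V(k := b))) * det (col_mat n (f(p := a, p' := V k))))"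
  proof (rule sum.mono_neutral_right)
    show "\<forall>k\<in>{..<n} - {p, p'}. det (col_mat n (V(k := b))) * det (col_mat n (f(p := a, p' := V k))) = 0"
    proof
      fix k assume k: "k \<in> {..<n} - {p, p'}"
      have "det (col_mat n (f(p := a, p' := V k))) = 0"
        by (rule det_identical_columns[OF col_mat_carrier, of k p']) (use k p' in \<open>auto simp: V_def\<close>)
      then show "det (col_mat n (V(k := b))) * det (col_mat n (f(p := a, p' := V k))) = 0" by simp
    qed
  qed (use p p' in auto)
  also have "\<dots> = det (col_mat n (f(p := b, p' := d))) * det (col_mat n (f(p := a, p' := c)))
       + det (col_mat n (f(p := c, p' := b))) * det (col_mat n (f(p := a, p' := d)))"
    using pp' by (simp add: V_def fun_upd_twist)
  finally show ?thesis unfolding V_def .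
qed

lemma det_unit_col:
  fixes A :: "'a :: comm_ring_1 mat"
  assumes A: "A \<in> carrier_mat n n" and k: "k < n" and r: "r < n"
    and col: "\<And>i. i < n \<Longrightarrow> A $$ (i, k) = of_bool (i = r)"
  shows "det A = (-1) ^ (r + k) * det (mat_delete A r k)"
proof -
  have "det A = (\<Sum>i<n. of_bool (i = r) * cofactor A i k)"
    using laplace_expansion_column[OF A k] by (simp add: col)
  also have "\<dots> = (\<Sum>i<n. if i = r then cofactor A i k else 0)"
    by (rule sum.cong) auto
  also have "\<dots> = cofactor A r k"
    using r by simp
  finally show ?thesis by (simp add: cofactor_def)
qed

lemma det_unit_row:
  fixes A :: "'a :: comm_ring_1 mat"
  assumes A: "A \<in> carrier_mat n n" and r: "r < n" and k: "k < n"
    and row: "\<And>j. j < n \<Longrightarrow> A $$ (r, j) = of_bool (j = k)"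
  shows "det A = (-1) ^ (r + k) * det (mat_delete A r k)"
proof -
  have "det A = (\<Sum>j<n. of_bool (j = k) * cofactor A r j)"
    using laplace_expansion_row[OF A r] by (simp add: row)
  also have "\<dots> = (\<Sum>j<n. if j = k then cofactor A r j else 0)"
    by (rule sum.cong) auto
  also have "\<dots> = cofactor A r k"
    using k by simp
  finally show ?thesis by (simp add: cofactor_def)
qed

lemma det_geometric_first_row:
  fixes A :: "'a :: comm_ring_1 mat"
  assumes A: "A \<in> carrier_mat (Suc n) (Suc n)"
    and row0: "\<And>j. j < Suc n \<Longrightarrow> A $$ (0, j) = c * u ^ j"
  shows "det A = c * det (mat n n (\<lambda>(i, j). A $$ (Suc i, Suc j) - u * A $$ (Suc i, j)))"
proof -
  \<comment> \<open>right multiplication by U subtracts u times column j - 1 from column j\<close>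
  define U :: "'a mat" where
    "U = mat (Suc n) (Suc n) (\<lambda>(i, j). if i = j then 1 else if Suc i = j then - u else 0)"
  have U: "U \<in> carrier_mat (Suc n) (Suc n)" unfolding U_def by simp
  have "det U = prod_list (diag_mat U)"
    by (rule det_upper_triangular[OF _ U]) (auto simp: U_def)
  also have "diag_mat U = map (\<lambda>_. 1) [0..<Suc n]"
    by (auto simp: diag_mat_def U_def)
  also have "prod_list \<dots> = 1" by (simp add: map_replicate_const)
  finally have det_U: "det U = 1" .
  have AU: "(A * U) $$ (i, j) = A $$ (i, j) - (if j = 0 then 0 else u * A $$ (i, j - 1))"
    if i: "i < Suc n" and j: "j < Suc n" for i j
  proof -
    have "(A * U) $$ (i, j) = (\<Sum>k<Suc n. A $$ (i, k) * U $$ (k, j))"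
      using A U i j by (auto simp: times_mat_def scalar_prod_def intro: sum.cong)
    also have "\<dots> = (\<Sum>k<Suc n. (if k = j then A $$ (i, k) else 0)
                              - (if Suc k = j then u * A $$ (i, k) else 0))"
      using j by (intro sum.cong) (auto simp: U_def)
    also have "\<dots> = A $$ (i, j) - (if j = 0 then 0 else u * A $$ (i, j - 1))"
      using j by (cases j) (auto simp: sum_subtractf)
    finally show ?thesis .
  qed
  have AU_carrier: "A * U \<in> carrier_mat (Suc n) (Suc n)" using A U by simp
  then have [simp]: "dim_row (A * U) = Suc n" "dim_col (A * U) = Suc n" by auto
  have "det A = det (A * U)" using det_mult[OF A U] det_U by simp
  also have "\<dots> = (\<Sum>j<Suc n. (A * U) $$ (0, j) * cofactor (A * U) 0 j)"
    by (rule laplace_expansion_row[OF AU_carrier]) simp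
  also have "\<dots> = (\<Sum>j<Suc n. if j = 0 then c * cofactor (A * U) 0 j else 0)"
    by (intro sum.cong) (auto simp: AU row0 gr0_conv_Suc)
  also have "\<dots> = c * det (mat_delete (A * U) 0 0)" by (simp add: cofactor_def)
  also have "mat_delete (A * U) 0 0 = mat n n (\<lambda>(i, j). A $$ (Suc i, Suc j) - u * A $$ (Suc i, j))"
    using AU_carrier by (intro eq_matI) (auto simp: mat_delete_def AU simp del: index_mult_mat)
  finally show ?thesis .
qed

section \<open>Staircase determinants\<close>

definition shift_sub :: "'a :: comm_ring_1 \<Rightarrow> (int \<Rightarrow> 'a) \<Rightarrow> int \<Rightarrow> 'a" where
  "shift_sub u g n = g n - u * g (n - 1)"

definition monic_seq :: "(int \<Rightarrow> 'a :: comm_ring_1) \<Rightarrow> bool" where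
  "monic_seq g \<longleftrightarrow> g 0 = 1 \<and> (\<forall>n < 0. g n = 0)"

definition stair_mat :: "nat \<Rightarrow> int \<Rightarrow> (int \<Rightarrow> 'a) \<Rightarrow> 'a mat" where
  "stair_mat n r g = mat n n (\<lambda>(i, j). g (r - 2 * int i + int j))"

definition stair_det :: "nat \<Rightarrow> (int \<Rightarrow> 'a :: comm_ring_1) \<Rightarrow> 'a" where
  "stair_det n g = det (stair_mat n (int n) g)"

lemma shift_sub_commute: "shift_sub u (shift_sub v g) = shift_sub v (shift_sub u g)"
  by (rule ext) (simp add: shift_sub_def algebra_simps)

lemma monic_seq_shift_sub: "monic_seq g \<Longrightarrow> monic_seq (shift_sub u g)"
  by (simp add: monic_seq_def shift_sub_def)

lemma det_stair_mat_border:
  "det (mat (Suc n) (Suc n) (\<lambda>(i, j). if i = 0 then c * u ^ j else g (r - 2 * int i + int j)))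
   = c * det (stair_mat n (r - 1) (shift_sub u g))"
  (is "det ?A = _")
proof -
  have "det ?A = c * det (mat n n (\<lambda>(i, j). ?A $$ (Suc i, Suc j) - u * ?A $$ (Suc i, j)))"
    by (rule det_geometric_first_row) auto
  also have "mat n n (\<lambda>(i, j). ?A $$ (Suc i, Suc j) - u * ?A $$ (Suc i, j))
           = stair_mat n (r - 1) (shift_sub u g)"
    by (rule eq_matI) (auto simp: stair_mat_def shift_sub_def algebra_simps)
  finally show ?thesis .
qed

lemma det_stair_mat_border2:
  "det (mat (Suc (Suc n)) (Suc (Suc n))
          (\<lambda>(i, j). if i = 0 then u ^ j else if i = 1 then v ^ j else g (r - 2 * int i + int j)))
   = (v - u) * det (stair_mat n (r - 2) (shift_sub v (shift_sub u g)))"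
  (is "det ?A = _")
proof -
  have "det ?A = det (mat (Suc n) (Suc n) (\<lambda>(i, j). ?A $$ (Suc i, Suc j) - u * ?A $$ (Suc i, j)))"
    using det_geometric_first_row[of ?A "Suc n" 1 u] by simp
  also have "mat (Suc n) (Suc n) (\<lambda>(i, j). ?A $$ (Suc i, Suc j) - u * ?A $$ (Suc i, j))
    = mat (Suc n) (Suc n)
        (\<lambda>(i, j). if i = 0 then (v - u) * v ^ j else shift_sub u g (r - 1 - 2 * int i + int j))"
    by (rule eq_matI) (auto simp: shift_sub_def algebra_simps)
  also have "det \<dots> = (v - u) * det (stair_mat n (r - 2) (shift_sub v (shift_sub u g)))"
    by (simp add: det_stair_mat_border)
  finally show ?thesis .
qed

lemma det_stair_mat_drop_last:
  assumes "monic_seq g"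
  shows "det (stair_mat (Suc n) (int n) g) = stair_det n g"
proof -
  have "det (stair_mat (Suc n) (int n) g) = (-1) ^ (n + n) * det (mat_delete (stair_mat (Suc n) (int n) g) n n)"
    by (rule det_unit_row[of _ "Suc n"]) (use assms in \<open>auto simp: stair_mat_def monic_seq_def\<close>)
  also have "mat_delete (stair_mat (Suc n) (int n) g) n n = stair_mat n (int n) g"
    by (rule eq_matI) (auto simp: mat_delete_def stair_mat_def)
  finally show ?thesis by (simp add: stair_det_def)
qed

definition unit_col :: "nat \<Rightarrow> nat \<Rightarrow> 'a :: zero_neq_one" where
  "unit_col r i = of_bool (i = r)"

definition bordered_stair_col :: "int \<Rightarrow> 'a :: comm_ring_1 \<Rightarrow> 'a \<Rightarrow> (int \<Rightarrow> 'a) \<Rightarrow> nat \<Rightarrow> nat \<Rightarrow> 'a" where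
  "bordered_stair_col r u v g k i =
     (if i = 0 then u ^ k else if i = 1 then v ^ k else g (r - 2 * int i + int k))"

context
  fixes N :: nat and u v :: "'a :: comm_ring_1" and g :: "int \<Rightarrow> 'a"
begin

lemma det_bordered_stair:
  "det (col_mat (N + 3) (bordered_stair_col (int N + 3) u v g))
   = (v - u) * stair_det (N + 1) (shift_sub v (shift_sub u g))"
proof -
  have "col_mat (N + 3) (bordered_stair_col (int N + 3) u v g)
      = mat (Suc (Suc (N + 1))) (Suc (Suc (N + 1)))
          (\<lambda>(i, j). if i = 0 then u ^ j else if i = 1 then v ^ j else g (int N + 3 - 2 * int i + int j))"
    by (rule eq_matI) (auto simp: bordered_stair_col_def)
  then show ?thesis
    by (simp add: det_stair_mat_border2 stair_det_def algebra_simps)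
qed

lemma det_bordered_stair_e0_e1:
  assumes "monic_seq g"
  shows "det (col_mat (N + 3) ((bordered_stair_col (int N + 3) u v g)(0 := unit_col 0, N + 2 := unit_col 1)))
       = (-1) ^ (N + 1) * stair_det N g"
proof -
  let ?A = "col_mat (N + 3) ((bordered_stair_col (int N + 3) u v g)(0 := unit_col 0, N + 2 := unit_col 1))"
  have "det ?A = det (mat_delete ?A 0 0)"
    by (subst det_unit_col[of _ "N + 3" 0 0]) (auto simp: unit_col_def)
  also have "\<dots> = (-1) ^ (N + 1) * det (mat_delete (mat_delete ?A 0 0) 0 (N + 1))"
    by (subst det_unit_col[of _ "N + 2" "N + 1" 0]) (auto simp: unit_col_def mat_delete_def)
  also have "mat_delete (mat_delete ?A 0 0) 0 (N + 1) = stair_mat (Suc N) (int N) g"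
    by (rule eq_matI) (auto simp: mat_delete_def stair_mat_def bordered_stair_col_def algebra_simps)
  also have "det \<dots> = stair_det N g"
    by (rule det_stair_mat_drop_last[OF assms])
  finally show ?thesis .
qed

lemma det_bordered_stair_e1_first:
  "det (col_mat (N + 3) ((bordered_stair_col (int N + 3) u v g)(0 := unit_col 1)))
   = - u * stair_det (N + 1) (shift_sub u g)"
proof -
  let ?A = "col_mat (N + 3) ((bordered_stair_col (int N + 3) u v g)(0 := unit_col 1))"
  have "det ?A = - det (mat_delete ?A 1 0)"
    by (subst det_unit_col[of _ "N + 3" 0 1]) (auto simp: unit_col_def)
  also have "mat_delete ?A 1 0 = mat (Suc (N + 1)) (Suc (N + 1))
     (\<lambda>(i, j). if i = 0 then u * u ^ j else g (int N + 2 - 2 * int i + int j))"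
    by (rule eq_matI) (auto simp: mat_delete_def bordered_stair_col_def algebra_simps)
  also have "det \<dots> = u * stair_det (N + 1) (shift_sub u g)"
    by (simp add: det_stair_mat_border stair_det_def algebra_simps)
  finally show ?thesis by (simp only: minus_mult_left)
qed

lemma det_bordered_stair_e0_last:
  assumes "monic_seq g"
  shows "det (col_mat (N + 3) ((bordered_stair_col (int N + 3) u v g)(N + 2 := unit_col 0)))
       = (-1) ^ N * stair_det N (shift_sub v g)"
proof -
  let ?A = "col_mat (N + 3) ((bordered_stair_col (int N + 3) u v g)(N + 2 := unit_col 0))"
  have "det ?A = (-1) ^ N * det (mat_delete ?A 0 (N + 2))"
    by (subst det_unit_col[of _ "N + 3" "N + 2" 0]) (auto simp: unit_col_def)
  also have "mat_delete ?A 0 (N + 2) = mat (Suc (N + 1)) (Suc (N + 1))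
     (\<lambda>(i, j). if i = 0 then 1 * v ^ j else g (int N + 1 - 2 * int i + int j))"
    by (rule eq_matI) (auto simp: mat_delete_def bordered_stair_col_def algebra_simps)
  also have "det \<dots> = det (stair_mat (Suc N) (int N) (shift_sub v g))"
    by (simp add: det_stair_mat_border)
  also have "\<dots> = stair_det N (shift_sub v g)"
    by (rule det_stair_mat_drop_last[OF monic_seq_shift_sub[OF assms]])
  finally show ?thesis .
qed

lemma det_bordered_stair_e0_first:
  "det (col_mat (N + 3) ((bordered_stair_col (int N + 3) u v g)(0 := unit_col 0)))
   = v * stair_det (N + 1) (shift_sub v g)"
proof -
  let ?A = "col_mat (N + 3) ((bordered_stair_col (int N + 3) u v g)(0 := unit_col 0))"
  have "det ?A = det (mat_delete ?A 0 0)"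
    by (subst det_unit_col[of _ "N + 3" 0 0]) (auto simp: unit_col_def)
  also have "mat_delete ?A 0 0 = mat (Suc (N + 1)) (Suc (N + 1))
     (\<lambda>(i, j). if i = 0 then v * v ^ j else g (int N + 2 - 2 * int i + int j))"
    by (rule eq_matI) (auto simp: mat_delete_def bordered_stair_col_def algebra_simps)
  also have "det \<dots> = v * stair_det (N + 1) (shift_sub v g)"
    by (simp add: det_stair_mat_border stair_det_def algebra_simps)
  finally show ?thesis .
qed

lemma det_bordered_stair_e1_last:
  assumes "monic_seq g"
  shows "det (col_mat (N + 3) ((bordered_stair_col (int N + 3) u v g)(N + 2 := unit_col 1)))
       = (-1) ^ (N + 1) * stair_det N (shift_sub u g)"
proof -
  let ?A = "col_mat (N + 3) ((bordered_stair_col (int N + 3) u v g)(N + 2 := unit_col 1))"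
  have "det ?A = (-1) ^ (N + 1) * det (mat_delete ?A 1 (N + 2))"
    by (subst det_unit_col[of _ "N + 3" "N + 2" 1]) (auto simp: unit_col_def)
  also have "mat_delete ?A 1 (N + 2) = mat (Suc (N + 1)) (Suc (N + 1))
     (\<lambda>(i, j). if i = 0 then 1 * u ^ j else g (int N + 1 - 2 * int i + int j))"
    by (rule eq_matI) (auto simp: mat_delete_def bordered_stair_col_def algebra_simps)
  also have "det \<dots> = det (stair_mat (Suc N) (int N) (shift_sub u g))"
    by (simp add: det_stair_mat_border)
  also have "\<dots> = stair_det N (shift_sub u g)"
    by (rule det_stair_mat_drop_last[OF monic_seq_shift_sub[OF assms]])
  finally show ?thesis .
qed

lemma det_bordered_stair_e1_e0:
  assumes "monic_seq g"
  shows "det (col_mat (N + 3) ((bordered_stair_col (int N + 3) u v g)(0 := unit_col 1, N + 2 := unit_col 0)))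
       = (-1) ^ N * stair_det N g"
proof -
  let ?A = "col_mat (N + 3) ((bordered_stair_col (int N + 3) u v g)(0 := unit_col 1, N + 2 := unit_col 0))"
  have "det ?A = - det (mat_delete ?A 1 0)"
    by (subst det_unit_col[of _ "N + 3" 0 1]) (auto simp: unit_col_def)
  also have "\<dots> = - ((-1) ^ (N + 1) * det (mat_delete (mat_delete ?A 1 0) 0 (N + 1)))"
    by (subst det_unit_col[of _ "N + 2" "N + 1" 0]) (auto simp: unit_col_def mat_delete_def)
  also have "mat_delete (mat_delete ?A 1 0) 0 (N + 1) = stair_mat (Suc N) (int N) g"
    by (rule eq_matI) (auto simp: mat_delete_def stair_mat_def bordered_stair_col_def algebra_simps)
  also have "det \<dots> = stair_det N g"
    by (rule det_stair_mat_drop_last[OF assms])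
  also have "- ((-1) ^ (N + 1) * stair_det N g) = (-1) ^ N * stair_det N g"
    by simp
  finally show ?thesis .
qed

lemma det_shifted_bordered_stair_e2_first:
  "det (col_mat (N + 3) ((\<lambda>k. bordered_stair_col (int N + 4) u v g (k - 1))(0 := unit_col 2)))
   = (v - u) * stair_det N (shift_sub v (shift_sub u g))"
proof -
  let ?A = "col_mat (N + 3) ((\<lambda>k. bordered_stair_col (int N + 4) u v g (k - 1))(0 := unit_col 2))"
  have "det ?A = det (mat_delete ?A 2 0)"
    by (subst det_unit_col[of _ "N + 3" 0 2]) (auto simp: unit_col_def)
  also have "mat_delete ?A 2 0 = mat (Suc (Suc N)) (Suc (Suc N))
     (\<lambda>(i, j). if i = 0 then u ^ j else if i = 1 then v ^ j else g (int N + 2 - 2 * int i + int j))"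
    by (rule eq_matI) (auto simp: mat_delete_def bordered_stair_col_def algebra_simps)
  also have "det \<dots> = (v - u) * stair_det N (shift_sub v (shift_sub u g))"
    by (simp add: det_stair_mat_border2 stair_det_def)
  finally show ?thesis .
qed

lemma det_shifted_bordered_stair_e0_e1:
  "det (col_mat (N + 3) ((\<lambda>k. bordered_stair_col (int N + 4) u v g (k - 1))(0 := unit_col 0, 1 := unit_col 1)))
   = stair_det (N + 1) g"
proof -
  let ?A = "col_mat (N + 3) ((\<lambda>k. bordered_stair_col (int N + 4) u v g (k - 1))(0 := unit_col 0, 1 := unit_col 1))"
  have "det ?A = det (mat_delete ?A 0 0)"
    by (subst det_unit_col[of _ "N + 3" 0 0]) (auto simp: unit_col_def)
  also have "\<dots> = det (mat_delete (mat_delete ?A 0 0) 0 0)"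
    by (subst det_unit_col[of _ "N + 2" 0 0]) (auto simp: unit_col_def mat_delete_def)
  also have "mat_delete (mat_delete ?A 0 0) 0 0 = stair_mat (N + 1) (int (N + 1)) g"
    by (rule eq_matI) (auto simp: mat_delete_def stair_mat_def bordered_stair_col_def algebra_simps)
  finally show ?thesis by (simp only: stair_det_def)
qed

lemma det_shifted_bordered_stair_e1_first:
  "det (col_mat (N + 3) ((\<lambda>k. bordered_stair_col (int N + 4) u v g (k - 1))(0 := unit_col 1)))
   = - stair_det (N + 1) (shift_sub u g)"
proof -
  let ?A = "col_mat (N + 3) ((\<lambda>k. bordered_stair_col (int N + 4) u v g (k - 1))(0 := unit_col 1))"
  have "det ?A = - det (mat_delete ?A 1 0)"
    by (subst det_unit_col[of _ "N + 3" 0 1]) (auto simp: unit_col_def)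
  also have "mat_delete ?A 1 0 = mat (Suc (N + 1)) (Suc (N + 1))
     (\<lambda>(i, j). if i = 0 then 1 * u ^ j else g (int N + 2 - 2 * int i + int j))"
    by (rule eq_matI) (auto simp: mat_delete_def bordered_stair_col_def algebra_simps)
  also have "det \<dots> = stair_det (N + 1) (shift_sub u g)"
    by (simp add: det_stair_mat_border stair_det_def algebra_simps)
  finally show ?thesis .
qed

lemma det_shifted_bordered_stair_e0_e2:
  "det (col_mat (N + 3) ((\<lambda>k. bordered_stair_col (int N + 4) u v g (k - 1))(0 := unit_col 0, 1 := unit_col 2)))
   = - v * stair_det N (shift_sub v g)"
proof -
  let ?A = "col_mat (N + 3) ((\<lambda>k. bordered_stair_col (int N + 4) u v g (k - 1))(0 := unit_col 0, 1 := unit_col 2))"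
  have "det ?A = det (mat_delete ?A 0 0)"
    by (subst det_unit_col[of _ "N + 3" 0 0]) (auto simp: unit_col_def)
  also have "\<dots> = - det (mat_delete (mat_delete ?A 0 0) 1 0)"
    by (subst det_unit_col[of _ "N + 2" 0 1]) (auto simp: unit_col_def mat_delete_def)
  also have "mat_delete (mat_delete ?A 0 0) 1 0 = mat (Suc N) (Suc N)
     (\<lambda>(i, j). if i = 0 then v * v ^ j else g (int N + 1 - 2 * int i + int j))"
    by (rule eq_matI) (auto simp: mat_delete_def bordered_stair_col_def algebra_simps)
  also have "det \<dots> = v * stair_det N (shift_sub v g)"
    by (simp add: det_stair_mat_border stair_det_def)
  finally show ?thesis by (simp only: minus_mult_left)
qed

lemma det_shifted_bordered_stair_e2_e1:
  "det (col_mat (N + 3) ((\<lambda>k. bordered_stair_col (int N + 4) u v g (k - 1))(0 := unit_col 2, 1 := unit_col 1)))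
   = - u * stair_det N (shift_sub u g)"
proof -
  let ?A = "col_mat (N + 3) ((\<lambda>k. bordered_stair_col (int N + 4) u v g (k - 1))(0 := unit_col 2, 1 := unit_col 1))"
  have "det ?A = det (mat_delete ?A 2 0)"
    by (subst det_unit_col[of _ "N + 3" 0 2]) (auto simp: unit_col_def)
  also have "\<dots> = - det (mat_delete (mat_delete ?A 2 0) 1 0)"
    by (subst det_unit_col[of _ "N + 2" 0 1]) (auto simp: unit_col_def mat_delete_def)
  also have "mat_delete (mat_delete ?A 2 0) 1 0 = mat (Suc N) (Suc N)
     (\<lambda>(i, j). if i = 0 then u * u ^ j else g (int N + 1 - 2 * int i + int j))"
    by (rule eq_matI) (auto simp: mat_delete_def bordered_stair_col_def algebra_simps)
  also have "det \<dots> = u * stair_det N (shift_sub u g)"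
    by (simp add: det_stair_mat_border stair_det_def)
  finally show ?thesis by (simp only: minus_mult_left)
qed

lemma det_shifted_bordered_stair_e0_first:
  "det (col_mat (N + 3) ((\<lambda>k. bordered_stair_col (int N + 4) u v g (k - 1))(0 := unit_col 0)))
   = stair_det (N + 1) (shift_sub v g)"
proof -
  let ?A = "col_mat (N + 3) ((\<lambda>k. bordered_stair_col (int N + 4) u v g (k - 1))(0 := unit_col 0))"
  have "det ?A = det (mat_delete ?A 0 0)"
    by (subst det_unit_col[of _ "N + 3" 0 0]) (auto simp: unit_col_def)
  also have "mat_delete ?A 0 0 = mat (Suc (N + 1)) (Suc (N + 1))
     (\<lambda>(i, j). if i = 0 then 1 * v ^ j else g (int N + 2 - 2 * int i + int j))"
    by (rule eq_matI) (auto simp: mat_delete_def bordered_stair_col_def algebra_simps)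
  also have "det \<dots> = stair_det (N + 1) (shift_sub v g)"
    by (simp add: det_stair_mat_border stair_det_def algebra_simps)
  finally show ?thesis .
qed

end

lemma stair_det_bilinear_shift_outer:
  fixes g :: "int \<Rightarrow> 'a :: comm_ring_1"
  assumes g: "monic_seq g"
  shows "(u - v) * stair_det (N + 1) (shift_sub u (shift_sub v g)) * stair_det N g
       = u * stair_det (N + 1) (shift_sub u g) * stair_det N (shift_sub v g)
       - v * stair_det (N + 1) (shift_sub v g) * stair_det N (shift_sub u g)"
proof -
  let ?F = "bordered_stair_col (int N + 3) u v g"
  have "det (col_mat (N + 3) (?F(0 := unit_col 1, N + 2 := ?F (N + 2))))
        * det (col_mat (N + 3) (?F(0 := ?F 0, N + 2 := unit_col 0)))
      = det (col_mat (N + 3) (?F(0 := unit_col 0, N + 2 := ?F (N + 2))))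
        * det (col_mat (N + 3) (?F(0 := ?F 0, N + 2 := unit_col 1)))
      + det (col_mat (N + 3) (?F(0 := unit_col 1, N + 2 := unit_col 0)))
        * det (col_mat (N + 3) (?F(0 := ?F 0, N + 2 := ?F (N + 2))))"
    by (rule det_col_mat_plucker) auto
  moreover have "?F(0 := x, N + 2 := ?F (N + 2)) = ?F(0 := x)"
    and "?F(0 := ?F 0, N + 2 := x) = ?F(N + 2 := x)" for x
    by auto
  ultimately have "- u * stair_det (N + 1) (shift_sub u g) * ((-1) ^ N * stair_det N (shift_sub v g))
      = v * stair_det (N + 1) (shift_sub v g) * ((-1) ^ (N + 1) * stair_det N (shift_sub u g))
      + (-1) ^ N * stair_det N g * ((v - u) * stair_det (N + 1) (shift_sub v (shift_sub u g)))"
    by (simp only: fun_upd_triv det_bordered_stair det_bordered_stair_e0_e1[OF g]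
        det_bordered_stair_e1_first det_bordered_stair_e0_last[OF g] det_bordered_stair_e0_first
        det_bordered_stair_e1_last[OF g] det_bordered_stair_e1_e0[OF g])
  then show ?thesis
    by (cases "even N") (auto simp: shift_sub_commute[of u v] algebra_simps)
qed

lemma stair_det_bilinear_shift_inner:
  fixes g :: "int \<Rightarrow> 'a :: comm_ring_1"
  shows "(u - v) * stair_det (N + 1) g * stair_det N (shift_sub u (shift_sub v g))
       = u * stair_det (N + 1) (shift_sub v g) * stair_det N (shift_sub u g)
       - v * stair_det (N + 1) (shift_sub u g) * stair_det N (shift_sub v g)"
proof -
  let ?G = "\<lambda>k. bordered_stair_col (int N + 4) u v g (k - 1)"
  have "det (col_mat (N + 3) (?G(0 := unit_col 2, 1 := ?G 1)))
        * det (col_mat (N + 3) (?G(0 := unit_col 0, 1 := unit_col 1)))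
      = det (col_mat (N + 3) (?G(0 := unit_col 1, 1 := ?G 1)))
        * det (col_mat (N + 3) (?G(0 := unit_col 0, 1 := unit_col 2)))
      + det (col_mat (N + 3) (?G(0 := unit_col 2, 1 := unit_col 1)))
        * det (col_mat (N + 3) (?G(0 := unit_col 0, 1 := ?G 1)))"
    by (rule det_col_mat_plucker) auto
  moreover have "?G(0 := x, 1 := ?G 1) = ?G(0 := x)" for x
    by auto
  ultimately have "(v - u) * stair_det N (shift_sub v (shift_sub u g)) * stair_det (N + 1) g
      = - stair_det (N + 1) (shift_sub u g) * (- v * stair_det N (shift_sub v g))
      + - u * stair_det N (shift_sub u g) * stair_det (N + 1) (shift_sub v g)"
    by (simp only: det_shifted_bordered_stair_e2_first det_shifted_bordered_stair_e0_e1
        det_shifted_bordered_stair_e1_first det_shifted_bordered_stair_e0_e2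
        det_shifted_bordered_stair_e2_e1 det_shifted_bordered_stair_e0_first)
  then show ?thesis
    by (simp add: shift_sub_commute[of u v] algebra_simps)
qed

lemma stair_det_leibniz:
  "stair_det n g = (\<Sum>p | p permutes {0..<n}. signof p * (\<Prod>i = 0..<n. g (int n - 2 * int i + int (p i))))"
proof -
  have "stair_det n g = (\<Sum>p | p permutes {0..<n}. signof p * (\<Prod>i = 0..<n. stair_mat n (int n) g $$ (i, p i)))"
    unfolding stair_det_def by (rule det_def') (simp add: stair_mat_def)
  also have "\<dots> = (\<Sum>p | p permutes {0..<n}. signof p * (\<Prod>i = 0..<n. g (int n - 2 * int i + int (p i))))"
    by (intro sum.cong prod.cong refl arg_cong2[where f = "(*)"])
       (auto simp: stair_mat_def dest: permutes_in_image)
  finally show ?thesis .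
qed

lemma sum_lessThan_diff_int: "(\<Sum>i<n. int n - int i) = int (n * (n + 1) div 2)"
proof -
  have "(\<Sum>i<n. int n - int i) = (\<Sum>i<n. int (Suc i))"
    by (subst sum.nat_diff_reindex[symmetric]) simp
  also have "\<dots> = int (\<Sum>i<n. Suc i)" by simp
  also have "(\<Sum>i<n. Suc i) = n * (n + 1) div 2"
    by (induction n) auto
  finally show ?thesis .
qed

lemma stair_det_powi_scale:
  fixes c :: "'a :: field"
  assumes c: "c \<noteq> 0"
  shows "stair_det n (\<lambda>k. c powi k * h k) = c ^ (n * (n + 1) div 2) * stair_det n h"
proof -
  have prod_powi: "(\<Prod>i\<in>A. c powi e i) = c powi (\<Sum>i\<in>A. e i)"
    if "finite A" for A :: "nat set" and e :: "nat \<Rightarrow> int"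
    using that by (induction A rule: finite_induct) (simp_all add: power_int_add c)
  have "(\<Sum>i = 0..<n. int n - 2 * int i + int (p i)) = int (n * (n + 1) div 2)"
    if p: "p permutes {0..<n}" for p
  proof -
    have "(\<Sum>i = 0..<n. int (p i)) = (\<Sum>i = 0..<n. int i)"
      using sum.permute[OF p, of int] by (simp add: comp_def)
    then have "(\<Sum>i = 0..<n. int n - 2 * int i + int (p i)) = (\<Sum>i<n. int n - int i)"
      by (simp add: sum.distrib sum_subtractf sum_distrib_left atLeast0LessThan)
    then show ?thesis by (simp add: sum_lessThan_diff_int)
  qed
  then have "(\<Prod>i = 0..<n. c powi (int n - 2 * int i + int (p i)) * h (int n - 2 * int i + int (p i)))
      = c ^ (n * (n + 1) div 2) * (\<Prod>i = 0..<n. h (int n - 2 * int i + int (p i)))"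
    if "p permutes {0..<n}" for p
    using that by (simp add: prod.distrib prod_powi)
  then show ?thesis
    by (simp add: stair_det_leibniz sum_distrib_left mult.left_commute)
qed

lemma continuous_on_stair_det:
  fixes H :: "complex \<Rightarrow> int \<Rightarrow> complex"
  assumes "\<And>k. continuous_on UNIV (\<lambda>x. H x k)"
  shows "continuous_on UNIV (\<lambda>x. stair_det n (H x))"
  unfolding stair_det_leibniz by (intro continuous_intros continuous_on_prod' assms)

lemma stair_det_shift2_sum:
  fixes g :: "int \<Rightarrow> complex"
  assumes g: "monic_seq g"
  shows "v * stair_det (N + 1) g * stair_det N (shift_sub u (shift_sub v g))
       + u * stair_det (N + 1) (shift_sub u (shift_sub v g)) * stair_det N g
       = (u + v) * stair_det (N + 1) (shift_sub u g) * stair_det N (shift_sub v g)"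
proof -
  define F where "F w = w * stair_det (N + 1) g * stair_det N (shift_sub u (shift_sub w g))
       + u * stair_det (N + 1) (shift_sub u (shift_sub w g)) * stair_det N g
       - (u + w) * stair_det (N + 1) (shift_sub u g) * stair_det N (shift_sub w g)" for w
  have F_off_diagonal: "F w = 0" if "w \<noteq> u" for w
  proof -
    have "(u - w) * F w
        = w * ((u - w) * stair_det (N + 1) g * stair_det N (shift_sub u (shift_sub w g)))
        + u * ((u - w) * stair_det (N + 1) (shift_sub u (shift_sub w g)) * stair_det N g)
        - (u + w) * (u - w) * stair_det (N + 1) (shift_sub u g) * stair_det N (shift_sub w g)"
      by (simp add: F_def algebra_simps)
    also have "\<dots> = 0"
      unfolding stair_det_bilinear_shift_outer[OF g] stair_det_bilinear_shift_inner
      by (simp add: algebra_simps)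
    finally have "(u - w) * F w = 0" .
    with that show ?thesis by simp
  qed
  \<comment> \<open>F is a polynomial in w vanishing off u, hence also at u\<close>
  have "continuous_on UNIV F"
    unfolding F_def shift_sub_def
    by (intro continuous_intros continuous_on_stair_det)
  then have "(F \<longlongrightarrow> F u) (at u)"
    by (simp add: continuous_on_def)
  moreover have "(F \<longlongrightarrow> 0) (at u)"
    by (rule tendsto_eventually) (auto simp: eventually_at_filter F_off_diagonal)
  ultimately have "F u = 0"
    by (rule tendsto_unique[OF at_neq_bot])
  then have "F v = 0"
    by (cases "v = u") (simp_all add: F_off_diagonal)
  then show ?thesis
    unfolding F_def by simp
qed

lemma stair_det_relation_outer:
  fixes g :: "int \<Rightarrow> 'a :: idom"
  assumes g: "monic_seq g" and k: "k \<noteq> 0"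
  shows "stair_det (N + 1) (shift_sub (- k) g) * stair_det N (shift_sub (k * z) g)
       + z * stair_det (N + 1) (shift_sub (k * z) g) * stair_det N (shift_sub (- k) g)
       = (1 + z) * stair_det (N + 1) (shift_sub (- k) (shift_sub (k * z) g)) * stair_det N g"
proof -
  have "- k * (stair_det (N + 1) (shift_sub (- k) g) * stair_det N (shift_sub (k * z) g)
       + z * stair_det (N + 1) (shift_sub (k * z) g) * stair_det N (shift_sub (- k) g))
      = - k * ((1 + z) * stair_det (N + 1) (shift_sub (- k) (shift_sub (k * z) g)) * stair_det N g)"
    using stair_det_bilinear_shift_outer[OF g, of "- k" "k * z" N] by (simp add: algebra_simps)
  with k show ?thesis by simp
qed

lemma stair_det_relation_inner:
  fixes g :: "int \<Rightarrow> 'a :: idom"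
  assumes k: "k \<noteq> 0"
  shows "z * stair_det (N + 1) (shift_sub (- k) g) * stair_det N (shift_sub (k * z) g)
       + stair_det (N + 1) (shift_sub (k * z) g) * stair_det N (shift_sub (- k) g)
       = (1 + z) * stair_det (N + 1) g * stair_det N (shift_sub (- k) (shift_sub (k * z) g))"
proof -
  have "- k * (z * stair_det (N + 1) (shift_sub (- k) g) * stair_det N (shift_sub (k * z) g)
       + stair_det (N + 1) (shift_sub (k * z) g) * stair_det N (shift_sub (- k) g))
      = - k * ((1 + z) * stair_det (N + 1) g * stair_det N (shift_sub (- k) (shift_sub (k * z) g)))"
    using stair_det_bilinear_shift_inner[of "- k" "k * z" N g] by (simp add: algebra_simps)
  with k show ?thesis by simp
qed

lemma stair_det_relation_sum:
  fixes g :: "int \<Rightarrow> complex"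
  assumes g: "monic_seq g" and k: "k \<noteq> 0"
  shows "z * stair_det (N + 1) g * stair_det N (shift_sub (k * y) (shift_sub (k * z) g))
       + y * stair_det (N + 1) (shift_sub (k * y) (shift_sub (k * z) g)) * stair_det N g
       = (y + z) * stair_det (N + 1) (shift_sub (k * y) g) * stair_det N (shift_sub (k * z) g)"
proof -
  have "k * (z * stair_det (N + 1) g * stair_det N (shift_sub (k * y) (shift_sub (k * z) g))
       + y * stair_det (N + 1) (shift_sub (k * y) (shift_sub (k * z) g)) * stair_det N g)
      = k * ((y + z) * stair_det (N + 1) (shift_sub (k * y) g) * stair_det N (shift_sub (k * z) g))"
    using stair_det_shift2_sum[OF g, of "k * z" N "k * y"] by (simp add: algebra_simps)
  with k show ?thesis by simp
qed

section \<open>The generating function of the polynomials p_n\<close>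

definition int_coeff :: "'a :: zero fps \<Rightarrow> int \<Rightarrow> 'a" where
  "int_coeff F n = (if n < 0 then 0 else fps_nth F (nat n))"

definition fps_dilate :: "'a :: comm_ring_1 \<Rightarrow> 'a fps \<Rightarrow> 'a fps" where
  "fps_dilate c F = Abs_fps (\<lambda>n. c ^ n * fps_nth F n)"

lemma fps_nth_dilate [simp]: "fps_nth (fps_dilate c F) n = c ^ n * fps_nth F n"
  by (simp add: fps_dilate_def)

lemma fps_dilate_mult:
  fixes F G :: "'a :: idom fps"
  shows "fps_dilate c (F * G) = fps_dilate c F * fps_dilate c G"
  using fps_compose_mult_distrib[of "fps_const c * fps_X" F G]
  by (simp add: fps_dilate_def fps_compose_linear)

lemma fps_dilate_dilate: "fps_dilate a (fps_dilate c F) = fps_dilate (a * c) F"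
  by (rule fps_ext) (simp add: power_mult_distrib mult_ac)

lemma fps_dilate_linear:
  "fps_dilate c (1 - fps_const a * fps_X) = 1 - fps_const (c * a) * fps_X"
  by (rule fps_ext) (auto simp: le_Suc_eq)

lemma int_coeff_mult_linear:
  fixes F :: "'a :: comm_ring_1 fps"
  shows "int_coeff (F * (1 - fps_const c * fps_X)) = shift_sub c (int_coeff F)"
proof
  fix n
  have "F * (1 - fps_const c * fps_X) = F - fps_const c * (F * fps_X)"
    by (simp add: algebra_simps)
  then show "int_coeff (F * (1 - fps_const c * fps_X)) n = shift_sub c (int_coeff F) n"
    by (auto simp: int_coeff_def shift_sub_def nat_diff_distrib' nat_less_iff)
qed

lemma int_coeff_dilate:
  fixes F :: "'a :: field fps"
  shows "int_coeff (fps_dilate c F) n = c powi n * int_coeff F n"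
  by (simp add: int_coeff_def power_int_def)

lemma qpoch_Suc: "qpoch q (Suc k) = qpoch q k * (1 - q ^ Suc k)"
  unfolding qpoch_def by simp

lemma qpoch_nonzero:
  assumes "\<forall>n::nat. n > 0 \<longrightarrow> q ^ n \<noteq> 1"
  shows "qpoch q k \<noteq> 0"
  unfolding qpoch_def using assms by auto

definition qexp_fps :: "complex \<Rightarrow> complex \<Rightarrow> complex fps" where
  "qexp_fps q y = Abs_fps (\<lambda>a. y ^ a / qpoch q a)"

definition qExp_fps :: "complex \<Rightarrow> complex fps" where
  "qExp_fps q = Abs_fps (\<lambda>c. q ^ (c * (c - 1) div 2) / qpoch q c)"

definition pp_fps :: "complex \<Rightarrow> complex \<Rightarrow> complex \<Rightarrow> complex fps" where
  "pp_fps q y z = fps_dilate (1 - q) (qexp_fps q y * (qexp_fps q z * qExp_fps q))"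

lemma qexp_fps_scale: "qexp_fps q (c * y) = fps_dilate c (qexp_fps q y)"
  by (simp add: qexp_fps_def fps_dilate_def power_mult_distrib)

lemma qexp_fps_mult_q:
  assumes q: "\<forall>n::nat. n > 0 \<longrightarrow> q ^ n \<noteq> 1"
  shows "qexp_fps q (q * y) = qexp_fps q y * (1 - fps_const y * fps_X)"
proof (rule fps_ext)
  fix n
  show "fps_nth (qexp_fps q (q * y)) n = fps_nth (qexp_fps q y * (1 - fps_const y * fps_X)) n"
  proof (cases n)
    case (Suc k)
    have "qpoch q k \<noteq> 0" "1 - q ^ Suc k \<noteq> 0"
      using qpoch_nonzero[OF q] q by auto
    then show ?thesis
      using Suc by (simp add: qexp_fps_def qpoch_Suc field_simps)
  qed (simp add: qexp_fps_def)
qed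

lemma qExp_fps_functional_eq:
  assumes q: "\<forall>n::nat. n > 0 \<longrightarrow> q ^ n \<noteq> 1"
  shows "qExp_fps q = fps_dilate q (qExp_fps q) * (1 + fps_X)"
proof (rule fps_ext)
  fix n
  show "fps_nth (qExp_fps q) n = fps_nth (fps_dilate q (qExp_fps q) * (1 + fps_X)) n"
  proof (cases n)
    case (Suc k)
    have "qpoch q k \<noteq> 0" "1 - q ^ Suc k \<noteq> 0"
      using qpoch_nonzero[OF q] q by auto
    moreover have "Suc k * (Suc k - 1) div 2 = k * (k - 1) div 2 + k"
      by (cases k) (simp_all add: algebra_simps)
    moreover have "fps_nth (fps_dilate q (qExp_fps q) * (1 + fps_X)) (Suc k)
        = q ^ Suc k * fps_nth (qExp_fps q) (Suc k) + q ^ k * fps_nth (qExp_fps q) k"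
      by (simp add: distrib_left)
    ultimately show ?thesis
      using Suc by (simp add: qExp_fps_def qpoch_Suc field_simps power_add)
  qed (simp add: qExp_fps_def)
qed

lemma pp_eq_int_coeff: "pp q n y z = int_coeff (pp_fps q y z) n"
proof (cases "n < 0")
  case False
  then obtain m where n: "n = int m" by (metis nonneg_int_cases not_less)
  have "fps_nth (qexp_fps q y * (qexp_fps q z * qExp_fps q)) m
     = (\<Sum>a\<le>m. \<Sum>b\<le>m - a. let c = m - a - b in
          y ^ a * z ^ b * q ^ (c * (c - 1) div 2) / (qpoch q a * qpoch q b * qpoch q c))"
    by (simp add: qexp_fps_def qExp_fps_def fps_mult_nth atLeast0AtMost sum_distrib_left
        diff_diff_eq Let_def mult.assoc)
  then show ?thesis
    by (simp add: n pp_def pp_fps_def int_coeff_def)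
qed (simp add: pp_def int_coeff_def)

lemma monic_seq_pp: "monic_seq (\<lambda>n. pp q n y z)"
  by (simp add: monic_seq_def pp_def qpoch_def)

lemma pp_commute: "pp q n y z = pp q n z y"
  by (simp add: pp_eq_int_coeff pp_fps_def mult.left_commute)

lemma pp_mult_q_left:
  assumes "\<forall>n::nat. n > 0 \<longrightarrow> q ^ n \<noteq> 1"
  shows "(\<lambda>n. pp q n (q * y) z) = shift_sub ((1 - q) * y) (\<lambda>n. pp q n y z)"
proof -
  have "pp_fps q (q * y) z
      = fps_dilate (1 - q) ((qexp_fps q y * (qexp_fps q z * qExp_fps q)) * (1 - fps_const y * fps_X))"
    unfolding pp_fps_def by (simp only: qexp_fps_mult_q[OF assms] mult_ac)
  also have "\<dots> = pp_fps q y z * (1 - fps_const ((1 - q) * y) * fps_X)"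
    by (simp only: pp_fps_def fps_dilate_mult fps_dilate_linear)
  finally show ?thesis
    by (simp add: pp_eq_int_coeff int_coeff_mult_linear)
qed

lemma pp_mult_q_right:
  assumes "\<forall>n::nat. n > 0 \<longrightarrow> q ^ n \<noteq> 1"
  shows "(\<lambda>n. pp q n y (q * z)) = shift_sub ((1 - q) * z) (\<lambda>n. pp q n y z)"
proof -
  have swap: "(\<lambda>n. pp q n y w) = (\<lambda>n. pp q n w y)" for w
    by (rule ext) (rule pp_commute)
  show ?thesis
    by (simp only: swap[of "q * z"] swap[of z] pp_mult_q_left[OF assms])
qed

lemma pp_mult_q_both:
  assumes q0: "q \<noteq> 0" and q: "\<forall>n::nat. n > 0 \<longrightarrow> q ^ n \<noteq> 1"
  shows "(\<lambda>n. pp q n (q * y) (q * z)) = (\<lambda>n. q powi n * shift_sub (- (1 - q) / q) (\<lambda>n. pp q n y z) n)"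
proof
  fix n
  have one_plus_X: "1 + fps_X = 1 - fps_const (-1) * (fps_X :: complex fps)"
    by (rule fps_ext) simp
  have "qexp_fps q (q * y) * (qexp_fps q (q * z) * qExp_fps q)
      = fps_dilate q (qexp_fps q y * (qexp_fps q z * qExp_fps q)) * (1 - fps_const (-1) * fps_X)"
    by (subst qExp_fps_functional_eq[OF q])
       (simp add: qexp_fps_scale fps_dilate_mult one_plus_X del: fps_const_neg)
  then have "pp_fps q (q * y) (q * z)
      = fps_dilate (1 - q) (fps_dilate q (qexp_fps q y * (qexp_fps q z * qExp_fps q)))
        * fps_dilate (1 - q) (1 - fps_const (-1) * fps_X)"
    unfolding pp_fps_def by (simp only: fps_dilate_mult)
  also have "\<dots> = fps_dilate q (pp_fps q y z) * (1 - fps_const ((1 - q) * - 1) * fps_X)"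
    unfolding pp_fps_def fps_dilate_dilate fps_dilate_linear by (simp only: mult.commute[of "1 - q" q])
  finally have "pp q n (q * y) (q * z) = q powi n * pp q n y z + (1 - q) * (q powi (n - 1) * pp q (n - 1) y z)"
    by (simp add: pp_eq_int_coeff int_coeff_mult_linear shift_sub_def int_coeff_dilate)
       (simp add: algebra_simps)
  also have "\<dots> = q powi n * shift_sub (- (1 - q) / q) (\<lambda>n. pp q n y z) n"
    using q0 by (simp add: shift_sub_def power_int_diff field_simps)
  finally show "pp q n (q * y) (q * z) = q powi n * shift_sub (- (1 - q) / q) (\<lambda>n. pp q n y z) n" .
qed

section \<open>The bilinear relations for phi_N\<close>

lemma phi_of_nat: "phi q (int M) y z = stair_det M (\<lambda>n. pp q n y z)"
proof -
  have index: "int M - 2 * (int i + 1) + (int j + 1) + 1 = int M - 2 * int i + int j" for i j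
    by simp
  have "phi q (int M) y z = phi_nat q M y z"
    by (simp add: phi_def)
  then show ?thesis
    unfolding phi_nat_def stair_det_def stair_mat_def index by simp
qed

lemma phi_reflect: "phi q (- N - 1) y z = (-1) ^ nat (N * (N + 1) div 2) * phi q N y z"
proof (cases "N \<ge> 0")
  case True
  have "(- N - 1) * (- N - 1 + 1) = N * (N + 1)" by (simp add: algebra_simps)
  with True show ?thesis by (simp add: phi_def)
next
  case False
  have "(-1 :: complex) ^ nat (N * (N + 1) div 2) * (-1) ^ nat (N * (N + 1) div 2) = 1"
    by (simp flip: power_add)
  with False show ?thesis by (simp add: phi_def)
qed

lemma phi_stair_dets:
  assumes q0: "q \<noteq> 0" and q: "\<forall>n::nat. n > 0 \<longrightarrow> q ^ n \<noteq> 1"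
    and g: "g = (\<lambda>n. pp q n (y / q) (z / q))" and k: "k = (1 - q) / q"
  shows "phi q (int M) (y / q) (z / q) = stair_det M g"
    and "phi q (int M) (y / q) z = stair_det M (shift_sub (k * z) g)"
    and "phi q (int M) y (z / q) = stair_det M (shift_sub (k * y) g)"
    and "phi q (int M) y z = stair_det M (shift_sub (k * y) (shift_sub (k * z) g))"
    and "phi q (int M) y z = q ^ (M * (M + 1) div 2) * stair_det M (shift_sub (- k) g)"
    and "phi q (int M) y (q * z)
       = q ^ (M * (M + 1) div 2) * stair_det M (shift_sub (- k) (shift_sub (k * z) g))"
proof -
  have cancel: "q * (x / q) = x" "(1 - q) * (x / q) = k * x" "- (1 - q) / q = - k" for x
    unfolding k using q0 by (simp_all add: field_simps)
  have yz': "(\<lambda>n. pp q n (y / q) z) = shift_sub (k * z) g"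
    using pp_mult_q_right[OF q, of "y / q" "z / q"] unfolding cancel g .
  have y'z: "(\<lambda>n. pp q n y (z / q)) = shift_sub (k * y) g"
    using pp_mult_q_left[OF q, of "y / q" "z / q"] unfolding cancel g .
  have yz: "(\<lambda>n. pp q n y z) = shift_sub (k * y) (shift_sub (k * z) g)"
    using pp_mult_q_left[OF q, of "y / q" z] unfolding cancel yz' .
  have yz_scaled: "(\<lambda>n. pp q n y z) = (\<lambda>n. q powi n * shift_sub (- k) g n)"
    using pp_mult_q_both[OF q0 q, of "y / q" "z / q"] unfolding cancel g .
  have yqz: "(\<lambda>n. pp q n y (q * z)) = (\<lambda>n. q powi n * shift_sub (- k) (shift_sub (k * z) g) n)"
    using pp_mult_q_both[OF q0 q, of "y / q" z] unfolding cancel yz' .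
  show "phi q (int M) (y / q) (z / q) = stair_det M g"
    by (simp add: phi_of_nat g)
  show "phi q (int M) (y / q) z = stair_det M (shift_sub (k * z) g)"
    by (simp add: phi_of_nat yz')
  show "phi q (int M) y (z / q) = stair_det M (shift_sub (k * y) g)"
    by (simp add: phi_of_nat y'z)
  show "phi q (int M) y z = stair_det M (shift_sub (k * y) (shift_sub (k * z) g))"
    by (simp add: phi_of_nat yz)
  show "phi q (int M) y z = q ^ (M * (M + 1) div 2) * stair_det M (shift_sub (- k) g)"
    by (simp add: phi_of_nat yz_scaled stair_det_powi_scale q0)
  show "phi q (int M) y (q * z)
      = q ^ (M * (M + 1) div 2) * stair_det M (shift_sub (- k) (shift_sub (k * z) g))"
    by (simp add: phi_of_nat yqz stair_det_powi_scale q0)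
qed

definition phi_relations :: "complex \<Rightarrow> int \<Rightarrow> complex \<Rightarrow> complex \<Rightarrow> bool" where
  "phi_relations q N y z \<longleftrightarrow>
     phi q (N+1) y z * phi q N (y/q) z + q powi (N+1) * z * phi q (N+1) (y/q) z * phi q N y z
       = (1 + z) * phi q (N+1) y (q*z) * phi q N (y/q) (z/q)
   \<and> q powi (-N-1) * z * phi q (N+1) y z * phi q N (y/q) z + phi q (N+1) (y/q) z * phi q N y z
       = (1 + z) * phi q (N+1) (y/q) (z/q) * phi q N y (q*z)
   \<and> z * phi q (N+1) (y/q) (z/q) * phi q N y z + y * phi q (N+1) y z * phi q N (y/q) (z/q)
       = (y + z) * phi q (N+1) y (z/q) * phi q N (y/q) z
   \<and> y * phi q (N+1) (y/q) (z/q) * phi q N y z + z * phi q (N+1) y z * phi q N (y/q) (z/q)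
       = (y + z) * phi q (N+1) (y/q) z * phi q N y (z/q)"

lemma phi_relations_nonneg:
  assumes q0: "q \<noteq> 0" and q: "\<forall>n::nat. n > 0 \<longrightarrow> q ^ n \<noteq> 1"
  shows "phi_relations q (int M) y z"
proof -
  define g where "g = (\<lambda>n. pp q n (y / q) (z / q))"
  define k where "k = (1 - q) / q"
  define d where "d = q ^ (M * (M + 1) div 2)"
  have g: "monic_seq g" unfolding g_def by (rule monic_seq_pp)
  have "q \<noteq> 1" using q by force
  then have k: "k \<noteq> 0" using q0 by (simp add: k_def)
  have "Suc M * (Suc M + 1) div 2 = Suc M + M * (M + 1) div 2"
    by (simp add: algebra_simps)
  then have triangle_Suc: "q ^ (Suc M * (Suc M + 1) div 2) = q ^ Suc M * q ^ (M * (M + 1) div 2)"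
    by (simp only: power_add)
  note D = phi_stair_dets[OF q0 q g_def k_def, of M, folded d_def]
  note D' = phi_stair_dets[OF q0 q g_def k_def, of "Suc M", unfolded triangle_Suc, folded d_def]
  have Suc: "int M + 1 = int (Suc M)" by simp
  have powi: "q powi int (Suc M) = q ^ Suc M" "q powi (- int M - 1) = inverse (q ^ Suc M)"
    by (simp_all add: power_int_def nat_add_distrib power_inverse)
  have cancel_powi: "inverse (q ^ Suc M) * w * (q ^ Suc M * d * A) * B = w * (d * A) * B" for w A B
    using q0 by (simp add: field_simps)
  show ?thesis
    unfolding phi_relations_def Suc powi
    apply (intro conjI)
    subgoal
      using arg_cong[where f = "\<lambda>x. q ^ Suc M * d * x",
          OF stair_det_relation_outer[OF g k, where N = M and z = z]]
      unfolding D(1,2,5) D'(2,5,6) by (simp add: algebra_simps)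
    subgoal
      using arg_cong[where f = "\<lambda>x. d * x",
          OF stair_det_relation_inner[OF k, where N = M and z = z and g = g]]
      unfolding D(2,5,6) D'(1,2,5) cancel_powi by (simp add: algebra_simps)
    subgoal
      using stair_det_relation_sum[OF g k, where N = M and y = y and z = z]
      unfolding D(1,2,4) D'(1,3,4) by (simp add: algebra_simps)
    subgoal
      using stair_det_relation_sum[OF g k, where N = M and y = z and z = y]
      unfolding D(1,3,4) D'(1,2,4) by (simp add: shift_sub_commute[of "k * z"] algebra_simps)
    done
qed

lemma phi_relations_reflect:
  assumes "phi_relations q N y z"
  shows "phi_relations q (- N - 2) y z"
proof -
  define s0 :: complex where "s0 = (-1) ^ nat (N * (N + 1) div 2)"
  define s1 :: complex where "s1 = (-1) ^ nat ((N + 1) * (N + 1 + 1) div 2)"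
  have shift: "- N - 2 + 1 = - N - 1" "- N - 2 = - (N + 1) - 1" "- (- N - 2) - 1 = N + 1"
    by simp_all
  have R1: "phi q (- N - 2 + 1) a b = s0 * phi q N a b" for a b
    unfolding shift(1) s0_def by (rule phi_reflect)
  have R2: "phi q (- N - 2) a b = s1 * phi q (N + 1) a b" for a b
    unfolding shift(2) s1_def by (rule phi_reflect)
  have P: "q powi (- N - 2 + 1) = q powi (- N - 1)" "q powi (- (- N - 2) - 1) = q powi (N + 1)"
    by (simp_all only: shift(1,3))
  \<comment> \<open>every term picks up the factor s0 * s1, and the identities are permuted\<close>
  note r = assms[unfolded phi_relations_def]
  show ?thesis
    unfolding phi_relations_def R1 R2 P
    apply (intro conjI)
    subgoal
      using arg_cong[where f = "\<lambda>x. s0 * s1 * x", OF r[THEN conjunct2, THEN conjunct1]]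
      by (simp add: algebra_simps)
    subgoal
      using arg_cong[where f = "\<lambda>x. s0 * s1 * x", OF r[THEN conjunct1]]
      by (simp add: algebra_simps)
    subgoal
      using arg_cong[where f = "\<lambda>x. s0 * s1 * x", OF r[THEN conjunct2, THEN conjunct2, THEN conjunct2]]
      by (simp add: algebra_simps)
    subgoal
      using arg_cong[where f = "\<lambda>x. s0 * s1 * x", OF r[THEN conjunct2, THEN conjunct2, THEN conjunct1]]
      by (simp add: algebra_simps)
    done
qed

lemma phi_relations_minus_one: "phi_relations q (-1) y z"
  by (simp add: phi_relations_def phi_def phi_nat_def algebra_simps)

theorem proposition2:
  fixes q y z :: complex and N :: int
  assumes "q \<noteq> 0" and "\<forall>n::nat. n > 0 \<longrightarrow> q ^ n \<noteq> 1"
  shows "phi q (N+1) y z * phi q N (y/q) z + q powi (N+1) * z * phi q (N+1) (y/q) z * phi q N y z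
           = (1 + z) * phi q (N+1) y (q*z) * phi q N (y/q) (z/q)
         \<and> q powi (-N-1) * z * phi q (N+1) y z * phi q N (y/q) z + phi q (N+1) (y/q) z * phi q N y z
           = (1 + z) * phi q (N+1) (y/q) (z/q) * phi q N y (q*z)
         \<and> z * phi q (N+1) (y/q) (z/q) * phi q N y z + y * phi q (N+1) y z * phi q N (y/q) (z/q)
           = (y + z) * phi q (N+1) y (z/q) * phi q N (y/q) z
         \<and> y * phi q (N+1) (y/q) (z/q) * phi q N y z + z * phi q (N+1) y z * phi q N (y/q) (z/q)
           = (y + z) * phi q (N+1) (y/q) z * phi q N y (z/q)"
proof -
  consider (nonneg) "N \<ge> 0" | (minus_one) "N = -1" | (below) "N \<le> -2"
    by linarith
  then have "phi_relations q N y z"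
  proof cases
    case nonneg
    then show ?thesis
      using phi_relations_nonneg[OF assms, of "nat N"] by simp
  next
    case minus_one
    then show ?thesis
      by (simp add: phi_relations_minus_one)
  next
    case below
    then have "N = - int (nat (- N - 2)) - 2"
      by simp
    then show ?thesis
      using phi_relations_reflect[OF phi_relations_nonneg[OF assms]] by metis
  qed
  then show ?thesis
    unfolding phi_relations_def .
qed

end
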